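(* Assume $F(x,v,u)=F_0(x,v)+F_1(x,v)u$ with $F_0:\mathbb{R}^n\times\mathbb{R}^n\to\mathbb{R}^n$ and $F_1:\mathbb{R}^n\times\mathbb{R}^n\to\mathbb{R}^{n\times m}$ globally Lipschitz continuous and continuously differentiable, and $\phi\in C([-\tau,0];\mathbb{R}^n)$. Let $(u_k)_{k\in\mathbb{N}}$ be bounded in $L^\infty(I;\mathbb{R}^m)$ with $u_k\rightharpoonup u$ in $L^1(I;\mathbb{R}^m)$. For each $k$ let $x_k\in C(I_\tau;\mathbb{R}^n)\cap W^{1,\infty}(I;\mathbb{R}^n)$ be the solution of $x_k'(t)=F(x_k(t),\mathrm{LIE}_k(x_{k,t}),u_k(t))$ for a.e. $t\in I$ with $x_k=\phi$ on $[-\tau,0]$. Then $x_k\to x$ in $C(I;\mathbb{R}^n)$, where $x$ is the solution of $x'(t)=F(x(t),\max x_t,u(t))$ for a.e. $t\in(0,T)$ with $x=\phi$ on $[-\tau,0]$.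
   Context: $n,m\ge1$, $T>0$, $\tau>0$, $I=[0,T]$, $I_\tau=[-\tau,T]$. For $x\in C(I_\tau;\mathbb{R}^n)$ and $t\in I$: $x_t(s)=x(t-s)$ for $s\in[0,\tau]$, $x_{k,t}:=(x_k)_t$, $\max x_t:=\max_{s\in[t-\tau,t]}x(s)$ and $\mathrm{LIE}_k(x_t):=\frac1k\log\big(\int_{t-\tau}^t\exp(k\,x(s))\,\mathrm{d}s\big)$, both componentwise. *)

theory Defs
  imports "HOL-Analysis.Analysis"
begin

definition C1_everywhere :: "('a::real_normed_vector \<Rightarrow> 'b::real_normed_vector) \<Rightarrow> bool" where
  "C1_everywhere f \<longleftrightarrow>
     (\<exists>D :: 'a \<Rightarrow> 'a \<Rightarrow>\<^sub>L 'b. (\<forall>z. (f has_derivative blinfun_apply (D z)) (at z)) \<and> continuous_on UNIV D)"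

definition globally_lipschitz :: "('a::metric_space \<Rightarrow> 'b::metric_space) \<Rightarrow> bool" where
  "globally_lipschitz f \<longleftrightarrow> (\<exists>L. L-lipschitz_on UNIV f)"

definition max_hist :: "real \<Rightarrow> (real \<Rightarrow> real^'n) \<Rightarrow> real \<Rightarrow> real^'n" where
  "max_hist \<tau> x t = (\<chi> i. (SUP s\<in>{t-\<tau>..t}. x s $ i))"

definition LIE :: "nat \<Rightarrow> real \<Rightarrow> (real \<Rightarrow> real^'n) \<Rightarrow> real \<Rightarrow> real^'n" where
  "LIE k \<tau> x t = (\<chi> i. (1 / real k) * ln (integral {t-\<tau>..t} (\<lambda>s. exp (real k * (x s $ i)))))"

text \<open>W^{1,\<infinity>} on the interval is rendered as Lipschitz continuity
(the continuous representative), and x' is the classical derivative, which exists a.e.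
and coincides with the weak derivative.\<close>
definition dde_solution ::
  "real \<Rightarrow> real \<Rightarrow> (real \<Rightarrow> real^'n) \<Rightarrow> ((real \<Rightarrow> real^'n) \<Rightarrow> real \<Rightarrow> real^'n) \<Rightarrow> (real \<Rightarrow> real^'n) \<Rightarrow> bool" where
  "dde_solution \<tau> T \<phi> G x \<longleftrightarrow>
     continuous_on {-\<tau>..T} x \<and>
     (\<exists>L. L-lipschitz_on {0..T} x) \<and>
     (\<forall>t\<in>{-\<tau>..0}. x t = \<phi> t) \<and>
     (AE t in lebesgue_on {0..T}. (x has_vector_derivative G x t) (at t))"

end

theory Submission
  imports Defs
begin

(* The log-integral-exp smoothing LIE_k(x_t) converges to max x_t uniformly on [0,T]
   (Laplace's principle), and it is Lipschitz in the state with respect to the sup norm on the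
   delay window. Subtracting the integral forms of the two equations, x_k - x is the integral of
   a term bounded by the error on the delay window plus uniformly small terms, plus the integral
   of F_1(x, max x_t)(u_k - u). The latter tends to 0 pointwise by weak convergence, and
   uniformly because these primitives share a modulus of continuity. A Gronwall argument with
   the weight exp(-lam t) closes the estimate. *)

lemma AE_lebesgue_on_iff_negligible:
  assumes "S \<in> sets lebesgue"
  shows "(AE t in lebesgue_on S. P t) \<longleftrightarrow> (\<exists>N. negligible N \<and> (\<forall>t\<in>S - N. P t))"
  using assms by (auto simp: AE_restrict_space_iff eventually_ae_filter_negligible)

lemma AE_lebesgue_on_subset:
  assumes "AE t in lebesgue_on S. P t" "S' \<subseteq> S" "S \<in> sets lebesgue" "S' \<in> sets lebesgue"
  shows "AE t in lebesgue_on S'. P t"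
  using assms by (auto simp: AE_lebesgue_on_iff_negligible)

lemma AE_lebesgue_onI:
  assumes "\<And>t. t \<in> S \<Longrightarrow> P t"
  shows "AE t in lebesgue_on S. P t"
  by (rule AE_I2) (use assms in auto)

lemma tendsto_difference_quotients_sequentially:
  fixes f :: "real \<Rightarrow> 'b::real_normed_vector"
  assumes "(f has_vector_derivative d) (at t)"
  shows "(\<lambda>n. real (Suc n) *\<^sub>R (f (t + 1 / real (Suc n)) - f t)) \<longlonglongrightarrow> d"
proof -
  define q where "q n = 1 / real (Suc n)" for n
  have "((\<lambda>y. norm (f y - f t - (y - t) *\<^sub>R d) / norm (y - t)) \<longlongrightarrow> 0) (at t)"
    using assms unfolding has_vector_derivative_def has_derivative_iff_norm by blast
  moreover have "filterlim (\<lambda>n. t + q n) (at t) sequentially"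
  proof (rule filterlim_atI)
    show "(\<lambda>n. t + q n) \<longlonglongrightarrow> t"
      using tendsto_add[OF tendsto_const LIMSEQ_Suc[OF lim_const_over_n[of 1]]] by (simp add: q_def)
  qed (simp add: q_def)
  ultimately have "(\<lambda>n. norm (f (t + q n) - f t - q n *\<^sub>R d) / norm (q n)) \<longlonglongrightarrow> 0"
    using filterlim_compose by fastforce
  moreover have "norm (f (t + q n) - f t - q n *\<^sub>R d) / norm (q n)
      = norm (real (Suc n) *\<^sub>R (f (t + q n) - f t) - d)" for n
  proof -
    have "f (t + q n) - f t - q n *\<^sub>R d = q n *\<^sub>R (real (Suc n) *\<^sub>R (f (t + q n) - f t) - d)"
      by (simp add: q_def scaleR_diff_right del: of_nat_Suc)
    then show ?thesis by (simp add: q_def del: of_nat_Suc)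
  qed
  ultimately show ?thesis
    by (simp add: q_def tendsto_norm_zero_iff LIM_zero_iff del: of_nat_Suc)
qed

lemma lipschitz_on_clamp_extension:
  fixes f :: "real \<Rightarrow> 'b::metric_space"
  assumes "L-lipschitz_on {a..b} f" "a \<le> b"
  shows "L-lipschitz_on UNIV (\<lambda>t. f (max a (min b t)))"
proof (rule lipschitz_onI)
  fix s t :: real
  have "dist (f (max a (min b s))) (f (max a (min b t))) \<le> L * dist (max a (min b s)) (max a (min b t))"
    using assms by (intro lipschitz_onD[OF assms(1)]) auto
  also have "\<dots> \<le> L * dist s t"
    using lipschitz_on_nonneg[OF assms(1)]
    by (intro mult_left_mono) (auto simp: dist_real_def max_def min_def)
  finally show "dist (f (max a (min b s))) (f (max a (min b t))) \<le> L * dist s t" .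
qed (rule lipschitz_on_nonneg[OF assms(1)])

lemma primitive_has_vector_derivative:
  fixes h :: "real \<Rightarrow> 'b::banach"
  assumes "continuous_on UNIV h" "c < t"
  shows "((\<lambda>u. integral {c..u} h) has_vector_derivative h t) (at t)"
proof -
  have "((\<lambda>u. integral {c..u} h) has_vector_derivative h t) (at t within {c..t+1})"
    using assms by (intro integral_has_vector_derivative continuous_on_subset[OF assms(1)]) auto
  moreover have "at t within {c..t+1} = at t"
    by (rule at_within_interior) (use assms(2) in simp)
  ultimately show ?thesis by (simp only:)
qed

lemma tendsto_averages_sequentially:
  fixes h :: "real \<Rightarrow> 'b::banach"
  assumes "continuous_on UNIV h"
  shows "(\<lambda>n. real (Suc n) *\<^sub>R integral {t..t + 1 / real (Suc n)} h) \<longlonglongrightarrow> h t"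
proof -
  define H where "H u = integral {t - 1..u} h" for u
  have "integral {t..t + 1 / real (Suc n)} h = H (t + 1 / real (Suc n)) - H t" for n
    using Henstock_Kurzweil_Integration.integral_combine[of "t - 1" t "t + 1 / real (Suc n)" h]
      integrable_continuous_interval[OF continuous_on_subset[OF assms]]
    by (simp add: H_def algebra_simps)
  moreover have "(\<lambda>n. real (Suc n) *\<^sub>R (H (t + 1 / real (Suc n)) - H t)) \<longlonglongrightarrow> h t"
    unfolding H_def
    by (intro tendsto_difference_quotients_sequentially primitive_has_vector_derivative assms) simp
  ultimately show ?thesis by simp
qed

lemma integral_shift_diff_Icc:
  fixes h :: "real \<Rightarrow> 'b::banach"
  assumes "continuous_on UNIV h" "a \<le> b" "0 \<le> q"
  shows "integral {a..b} (\<lambda>t. h (t + q) - h t) = integral {b..b+q} h - integral {a..a+q} h"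
proof -
  have int: "h integrable_on {c..d}" for c d
    by (rule integrable_continuous_interval[OF continuous_on_subset[OF assms(1)]]) simp
  have "(\<lambda>t. h (t + q)) integrable_on {a..b}"
    by (intro integrable_continuous_interval continuous_on_compose2[OF assms(1)] continuous_intros) auto
  then have shift: "integral {a..b} (\<lambda>t. h (t + q) - h t) = integral {a+q..b+q} h - integral {a..b} h"
    using integral_shift_Icc_real[of a b h q] by (simp add: integral_diff int o_def add.commute)
  have "integral {a..a+q} h + integral {a+q..b+q} h = integral {a..b} h + integral {b..b+q} h"
    using Henstock_Kurzweil_Integration.integral_combine[OF _ _ int, of a "a+q" "b+q"]
      Henstock_Kurzweil_Integration.integral_combine[OF _ _ int, of a b "b+q"] assms(2,3)
    by simp
  then show ?thesis unfolding shift by (simp add: algebra_simps)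
qed

lemma bounded_convergence_lebesgue_on_Icc:
  fixes D :: "nat \<Rightarrow> real \<Rightarrow> 'b::euclidean_space"
  assumes cont: "\<And>n. continuous_on {a..b} (D n)" and bound: "\<And>n t. norm (D n t) \<le> L"
    and "negligible N" and lim: "\<And>t. t \<in> {a..b} - N \<Longrightarrow> (\<lambda>n. D n t) \<longlonglongrightarrow> g t"
  shows "integrable (lebesgue_on {a..b}) g"
    and "(\<lambda>n. integral\<^sup>L (lebesgue_on {a..b}) (D n)) \<longlonglongrightarrow> integral\<^sup>L (lebesgue_on {a..b}) g"
proof -
  have D_meas: "D n \<in> borel_measurable (lebesgue_on {a..b})" for n
    by (rule continuous_imp_measurable_on_sets_lebesgue[OF cont]) simp
  have "g measurable_on {a..b}"
    by (rule measurable_on_limit[OF _ \<open>negligible N\<close> lim])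
       (simp add: measurable_on_iff_borel_measurable D_meas)
  then have g_meas: "g \<in> borel_measurable (lebesgue_on {a..b})"
    by (simp add: measurable_on_iff_borel_measurable)
  have lim_AE: "AE t in lebesgue_on {a..b}. (\<lambda>n. D n t) \<longlonglongrightarrow> g t"
    using \<open>negligible N\<close> lim by (auto simp: AE_lebesgue_on_iff_negligible)
  have L_int: "integrable (lebesgue_on {a..b}) (\<lambda>t. L)" by simp
  have bound_AE: "AE t in lebesgue_on {a..b}. norm (D n t) \<le> L" for n by (simp add: bound)
  show "integrable (lebesgue_on {a..b}) g"
    by (rule integrable_dominated_convergence[OF g_meas D_meas L_int lim_AE bound_AE])
  show "(\<lambda>n. integral\<^sup>L (lebesgue_on {a..b}) (D n)) \<longlonglongrightarrow> integral\<^sup>L (lebesgue_on {a..b}) g"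
    by (rule integral_dominated_convergence[OF g_meas D_meas L_int lim_AE bound_AE])
qed

text \<open>The difference quotients of a Lipschitz extension are continuous, bounded by the
  Lipschitz constant and converge a.e., so bounded convergence applies; their integrals are
  differences of averages of the extension near the two end points.\<close>

lemma lipschitz_ae_derivative_integral:
  fixes f g :: "real \<Rightarrow> 'b::euclidean_space"
  assumes ab: "a \<le> b" and lip: "L-lipschitz_on {a..b} f"
    and der: "AE t in lebesgue_on {a..b}. (f has_vector_derivative g t) (at t)"
  shows "integrable (lebesgue_on {a..b}) g" "integral\<^sup>L (lebesgue_on {a..b}) g = f b - f a"
proof -
  define h where "h t = f (max a (min b t))" for t
  define D where "D n t = real (Suc n) *\<^sub>R (h (t + 1 / real (Suc n)) - h t)" for n t
  have h_lip: "L-lipschitz_on UNIV h"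
    unfolding h_def by (rule lipschitz_on_clamp_extension[OF lip ab])
  have h_cont: "continuous_on UNIV h"
    by (rule lipschitz_on_continuous_on[OF h_lip])
  have D_cont: "continuous_on {a..b} (D n)" for n
    unfolding D_def by (intro continuous_intros continuous_on_compose2[OF h_cont]) auto
  have D_bound: "norm (D n t) \<le> L" for n t
  proof -
    have "norm (D n t) = real (Suc n) * norm (h (t + 1 / real (Suc n)) - h t)"
      by (simp add: D_def del: of_nat_Suc)
    also have "\<dots> \<le> real (Suc n) * (L * (1 / real (Suc n)))"
      using lipschitz_on_normD[OF h_lip, of "t + 1 / real (Suc n)" t] by (intro mult_left_mono) auto
    finally show ?thesis by simp
  qed
  obtain N where N: "negligible N" "\<And>t. t \<in> {a..b} - N \<Longrightarrow> (f has_vector_derivative g t) (at t)"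
    using der by (auto simp: AE_lebesgue_on_iff_negligible)
  have D_lim: "(\<lambda>n. D n t) \<longlonglongrightarrow> g t" if "t \<in> {a..b} - (N \<union> {a, b})" for t
  proof -
    have "(f has_vector_derivative g t) (at t)" using N(2) that by blast
    then have "(h has_vector_derivative g t) (at t)"
      by (rule has_vector_derivative_transform_within_open[of _ _ _ "{a<..<b}"])
         (use that in \<open>auto simp: h_def\<close>)
    then show ?thesis unfolding D_def by (rule tendsto_difference_quotients_sequentially)
  qed
  have "negligible (N \<union> {a, b})" using N(1) by (simp add: negligible_Un)
  note convergence = bounded_convergence_lebesgue_on_Icc[OF D_cont D_bound this D_lim]
  show "integrable (lebesgue_on {a..b}) g" by (rule convergence(1))
  have "integral\<^sup>L (lebesgue_on {a..b}) (D n)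
      = real (Suc n) *\<^sub>R integral {b..b + 1 / real (Suc n)} h
        - real (Suc n) *\<^sub>R integral {a..a + 1 / real (Suc n)} h" for n
  proof -
    have "integral\<^sup>L (lebesgue_on {a..b}) (D n) = integral {a..b} (D n)"
      by (intro lebesgue_integral_eq_integral continuous_imp_integrable_real D_cont) simp
    also have "\<dots> = real (Suc n) *\<^sub>R integral {a..b} (\<lambda>t. h (t + 1 / real (Suc n)) - h t)"
      unfolding D_def by (rule integral_cmul)
    finally show ?thesis
      by (simp add: integral_shift_diff_Icc[OF h_cont ab] scaleR_diff_right del: of_nat_Suc)
  qed
  moreover have "(\<lambda>n. real (Suc n) *\<^sub>R integral {b..b + 1 / real (Suc n)} h
      - real (Suc n) *\<^sub>R integral {a..a + 1 / real (Suc n)} h) \<longlonglongrightarrow> h b - h a"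
    by (intro tendsto_diff tendsto_averages_sequentially h_cont)
  ultimately have "integral\<^sup>L (lebesgue_on {a..b}) g = h b - h a"
    using convergence(2) LIMSEQ_unique by auto
  then show "integral\<^sup>L (lebesgue_on {a..b}) g = f b - f a"
    using ab by (simp add: h_def)
qed

lemma globally_lipschitz_uncurriedE:
  fixes F :: "'a::real_normed_vector \<Rightarrow> 'b::real_normed_vector \<Rightarrow> 'c::real_normed_vector"
  assumes "globally_lipschitz (\<lambda>p. F (fst p) (snd p))"
  obtains L where "0 \<le> L" "\<And>a b a' b'. norm (F a b - F a' b') \<le> L * (norm (a - a') + norm (b - b'))"
proof -
  obtain L where L: "L-lipschitz_on UNIV (\<lambda>p. F (fst p) (snd p))"
    using assms unfolding globally_lipschitz_def by blast
  have "norm (F a b - F a' b') \<le> L * (norm (a - a') + norm (b - b'))" for a b a' b'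
  proof -
    have "norm (F a b - F a' b') \<le> L * norm ((a, b) - (a', b'))"
      using lipschitz_on_normD[OF L, of "(a, b)" "(a', b')"] by simp
    also have "\<dots> \<le> L * (norm (a - a') + norm (b - b'))"
      using norm_Pair_le[of "a - a'" "b - b'"] lipschitz_on_nonneg[OF L] by (intro mult_left_mono) auto
    finally show ?thesis .
  qed
  then show ?thesis using that lipschitz_on_nonneg[OF L] by blast
qed

lemma norm_le_card_cart:
  fixes x :: "real^'n"
  assumes "\<And>i. \<bar>x $ i\<bar> \<le> c"
  shows "norm x \<le> real CARD('n) * c"
proof -
  have "norm x \<le> (\<Sum>i\<in>UNIV. \<bar>x $ i\<bar>)" by (rule norm_le_l1_cart)
  also have "\<dots> \<le> real CARD('n) * c"
    using sum_bounded_above[of UNIV "\<lambda>i. \<bar>x $ i\<bar>" c] assms by simp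
  finally show ?thesis .
qed

lemma norm_matrix_vector_mult_le:
  fixes A :: "real^'m^'n" and v :: "real^'m"
  shows "norm (A *v v) \<le> real CARD('n) * norm A * norm v"
proof -
  have "\<bar>(A *v v) $ i\<bar> \<le> norm A * norm v" for i
  proof -
    have "\<bar>(A *v v) $ i\<bar> \<le> norm (A $ i) * norm v"
      by (simp add: matrix_mult_dot Cauchy_Schwarz_ineq2)
    also have "\<dots> \<le> norm A * norm v"
      by (intro mult_right_mono Finite_Cartesian_Product.norm_nth_le) auto
    finally show ?thesis .
  qed
  then show ?thesis
    using norm_le_card_cart[of "A *v v" "norm A * norm v"] by (simp add: mult.assoc)
qed

lemma bilinear_matrix_vector_mult: "bilinear (\<lambda>(A::real^'m^'n) v. A *v v)"
  unfolding bilinear_def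
proof (intro conjI allI)
  fix A :: "real^'m^'n"
  show "linear (\<lambda>v. A *v v)" by simp
next
  fix v :: "real^'m"
  show "linear (\<lambda>A::real^'m^'n. A *v v)"
    by (rule linearI) (simp_all add: matrix_vector_mult_add_rdistrib scaleR_matrix_vector_assoc)
qed

lemma uniform_limit_cart_componentwise:
  fixes f :: "'k \<Rightarrow> 'a \<Rightarrow> real^'n"
  assumes "\<And>i. uniform_limit S (\<lambda>k t. f k t $ i) (\<lambda>t. g t $ i) F"
  shows "uniform_limit S f g F"
  unfolding uniform_limit_iff
proof (intro allI impI)
  fix \<epsilon> :: real assume "0 < \<epsilon>"
  define \<epsilon>' where "\<epsilon>' = \<epsilon> / (2 * real CARD('n))"
  have "0 < \<epsilon>'" using \<open>0 < \<epsilon>\<close> by (simp add: \<epsilon>'_def)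
  then have "\<forall>i. \<forall>\<^sub>F k in F. \<forall>t\<in>S. dist (f k t $ i) (g t $ i) < \<epsilon>'"
    using assms unfolding uniform_limit_iff by blast
  then have "\<forall>\<^sub>F k in F. \<forall>i. \<forall>t\<in>S. dist (f k t $ i) (g t $ i) < \<epsilon>'"
    by (simp add: eventually_all_finite)
  then show "\<forall>\<^sub>F k in F. \<forall>t\<in>S. dist (f k t) (g t) < \<epsilon>"
  proof eventually_elim
    case (elim k)
    show ?case
    proof
      fix t assume "t \<in> S"
      have "dist (f k t) (g t) \<le> real CARD('n) * \<epsilon>'"
        unfolding dist_norm using elim \<open>t \<in> S\<close>
        by (intro norm_le_card_cart) (auto simp: dist_real_def less_imp_le)
      also have "\<dots> < \<epsilon>" using \<open>0 < \<epsilon>\<close> by (simp add: \<epsilon>'_def)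
      finally show "dist (f k t) (g t) < \<epsilon>" .
    qed
  qed
qed

lemma control_affine_lipschitzE:
  fixes F0 :: "'a::real_normed_vector \<Rightarrow> 'b::real_normed_vector \<Rightarrow> real^'n"
    and F1 :: "'a \<Rightarrow> 'b \<Rightarrow> real^'m^'n"
  assumes "globally_lipschitz (\<lambda>p. F0 (fst p) (snd p))" "globally_lipschitz (\<lambda>p. F1 (fst p) (snd p))"
  obtains C where "0 \<le> C" "\<And>a b a' b' v. norm v \<le> M \<Longrightarrow>
    norm (F0 a b - F0 a' b' + (F1 a b - F1 a' b') *v v) \<le> C * (norm (a - a') + norm (b - b'))"
proof -
  obtain L0 where L0: "0 \<le> L0" "\<And>a b a' b'. norm (F0 a b - F0 a' b') \<le> L0 * (norm (a - a') + norm (b - b'))"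
    using globally_lipschitz_uncurriedE[OF assms(1)] by blast
  obtain L1 where L1: "0 \<le> L1" "\<And>a b a' b'. norm (F1 a b - F1 a' b') \<le> L1 * (norm (a - a') + norm (b - b'))"
    using globally_lipschitz_uncurriedE[OF assms(2)] by blast
  \<comment> \<open>\<open>max 0 M\<close> keeps \<open>C\<close> nonnegative when \<open>M < 0\<close>, where the claim is vacuous.\<close>
  define C where "C = L0 + real CARD('n) * L1 * max 0 M"
  have "norm (F0 a b - F0 a' b' + (F1 a b - F1 a' b') *v v) \<le> C * (norm (a - a') + norm (b - b'))"
    if "norm v \<le> M" for a b a' b' v
  proof -
    define d where "d = norm (a - a') + norm (b - b')"
    have "max 0 M = M" using that norm_ge_zero[of v] by linarith
    have "norm ((F1 a b - F1 a' b') *v v) \<le> real CARD('n) * norm (F1 a b - F1 a' b') * norm v"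
      by (rule norm_matrix_vector_mult_le)
    also have "\<dots> \<le> real CARD('n) * (L1 * d) * M"
      using L1 that unfolding d_def by (intro mult_mono mult_left_mono) auto
    finally have "norm ((F1 a b - F1 a' b') *v v) \<le> real CARD('n) * (L1 * d) * M" .
    moreover have "norm (F0 a b - F0 a' b') \<le> L0 * d" unfolding d_def by (rule L0(2))
    moreover have "C * d = L0 * d + real CARD('n) * (L1 * d) * M"
      using \<open>max 0 M = M\<close> by (simp add: C_def algebra_simps)
    ultimately show ?thesis
      using norm_triangle_ineq[of "F0 a b - F0 a' b'" "(F1 a b - F1 a' b') *v v"]
      unfolding d_def by linarith
  qed
  moreover have "0 \<le> C" using L0(1) L1(1) by (simp add: C_def)
  ultimately show ?thesis using that by blast
qed

section \<open>The window maximum and its log-integral-exp smoothing\<close>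

lemma continuous_on_Icc_attains_Sup:
  fixes w :: "real \<Rightarrow> real"
  assumes "a \<le> b" "continuous_on {a..b} w"
  obtains s0 where "s0 \<in> {a..b}" "(SUP s\<in>{a..b}. w s) = w s0" "\<And>s. s \<in> {a..b} \<Longrightarrow> w s \<le> w s0"
proof -
  obtain s0 where s0: "s0 \<in> {a..b}" "\<forall>s\<in>{a..b}. w s \<le> w s0"
    using continuous_attains_sup[of "{a..b}" w] assms by auto
  moreover have "(SUP s\<in>{a..b}. w s) = w s0"
    using s0 by (intro cSup_eq_maximum) auto
  ultimately show ?thesis using that by blast
qed

lemma Sup_window_le_shift:
  fixes w :: "real \<Rightarrow> real"
  assumes "0 \<le> \<tau>" "continuous_on {t-\<tau>..t} w" "continuous_on {t'-\<tau>..t'} w"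
    and "\<And>s. s \<in> {t-\<tau>..t} \<Longrightarrow> w s \<le> w (s + (t' - t)) + e"
  shows "(SUP s\<in>{t-\<tau>..t}. w s) \<le> (SUP s\<in>{t'-\<tau>..t'}. w s) + e"
proof -
  obtain s0 where s0: "s0 \<in> {t-\<tau>..t}" "(SUP s\<in>{t-\<tau>..t}. w s) = w s0"
    using continuous_on_Icc_attains_Sup[OF _ assms(2)] assms(1) by auto
  obtain s1 where s1: "s1 \<in> {t'-\<tau>..t'}" "(SUP s\<in>{t'-\<tau>..t'}. w s) = w s1"
      "\<And>s. s \<in> {t'-\<tau>..t'} \<Longrightarrow> w s \<le> w s1"
    using continuous_on_Icc_attains_Sup[OF _ assms(3)] assms(1) by auto
  have "w s0 \<le> w (s0 + (t' - t)) + e" using assms(4) s0(1) .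
  also have "w (s0 + (t' - t)) \<le> w s1" using s1(3) s0(1) by auto
  finally show ?thesis using s0(2) s1(2) by simp
qed

lemma continuous_on_Sup_window:
  fixes w :: "real \<Rightarrow> real"
  assumes "0 \<le> \<tau>" "continuous_on {-\<tau>..T} w"
  shows "continuous_on {0..T} (\<lambda>t. SUP s\<in>{t-\<tau>..t}. w s)"
  unfolding continuous_on_iff
proof (intro ballI allI impI)
  fix t e :: real assume t: "t \<in> {0..T}" and "0 < e"
  have "uniformly_continuous_on {-\<tau>..T} w"
    by (rule compact_uniformly_continuous[OF assms(2)]) simp
  then obtain d where "0 < d" and d: "\<And>s s'. s \<in> {-\<tau>..T} \<Longrightarrow> s' \<in> {-\<tau>..T} \<Longrightarrow>
      dist s' s < d \<Longrightarrow> dist (w s') (w s) < e/2"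
    using \<open>0 < e\<close> unfolding uniformly_continuous_on_def by (meson half_gt_zero)
  have window: "continuous_on {u-\<tau>..u} w" if "u \<in> {0..T}" for u
    by (rule continuous_on_subset[OF assms(2)]) (use that in auto)
  have shift: "(SUP s\<in>{u-\<tau>..u}. w s) \<le> (SUP s\<in>{u'-\<tau>..u'}. w s) + e/2"
    if u: "u \<in> {0..T}" "u' \<in> {0..T}" "\<bar>u - u'\<bar> < d" for u u'
  proof (rule Sup_window_le_shift[OF assms(1) window[OF u(1)] window[OF u(2)]])
    fix s assume "s \<in> {u-\<tau>..u}"
    then have "dist (w (s + (u' - u))) (w s) < e/2"
      using u by (intro d) (auto simp: dist_real_def)
    then show "w s \<le> w (s + (u' - u)) + e/2" unfolding dist_real_def by arith
  qed
  show "\<exists>d>0. \<forall>t'\<in>{0..T}. dist t' t < d \<longrightarrow>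
      dist (SUP s\<in>{t'-\<tau>..t'}. w s) (SUP s\<in>{t-\<tau>..t}. w s) < e"
  proof (intro exI[of _ d] conjI ballI impI)
    fix t' assume t': "t' \<in> {0..T}" and "dist t' t < d"
    then have "\<bar>t' - t\<bar> < d" "\<bar>t - t'\<bar> < d" by (auto simp: dist_real_def)
    then show "dist (SUP s\<in>{t'-\<tau>..t'}. w s) (SUP s\<in>{t-\<tau>..t}. w s) < e"
      using shift[OF t t'] shift[OF t' t] \<open>0 < e\<close> unfolding dist_real_def by linarith
  qed (rule \<open>0 < d\<close>)
qed

lemma continuous_on_max_hist:
  assumes "0 \<le> \<tau>" "continuous_on {-\<tau>..T} x"
  shows "continuous_on {0..T} (max_hist \<tau> x)"
  unfolding max_hist_def[abs_def]
  by (intro continuous_on_vec_lambda continuous_on_Sup_window[OF assms(1)]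
      continuous_on_component assms(2))

lemma continuous_on_compose_max_hist:
  fixes F :: "real^'n \<Rightarrow> real^'n \<Rightarrow> 'b::topological_space"
  assumes "continuous_on UNIV (\<lambda>p. F (fst p) (snd p))" "0 \<le> \<tau>" "continuous_on {-\<tau>..T} x"
  shows "continuous_on {0..T} (\<lambda>s. F (x s) (max_hist \<tau> x s))"
proof -
  have "continuous_on {0..T} (\<lambda>s. (x s, max_hist \<tau> x s))"
    using assms(2)
    by (intro continuous_on_Pair continuous_on_subset[OF assms(3)] continuous_on_max_hist assms(3)) auto
  then show ?thesis using continuous_on_compose2[OF assms(1)] by fastforce
qed

lemma integral_exp_pos:
  fixes w :: "real \<Rightarrow> real"
  assumes "a < b" "continuous_on {a..b} w"
  shows "0 < integral {a..b} (\<lambda>s. exp (w s))"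
proof -
  obtain s0 where s0: "s0 \<in> {a..b}" "\<forall>s\<in>{a..b}. w s0 \<le> w s"
    using continuous_attains_inf[of "{a..b}" w] assms by auto
  have "0 < (b - a) * exp (w s0)" using assms by simp
  also have "\<dots> = integral {a..b} (\<lambda>s. exp (w s0))" using assms by simp
  also have "\<dots> \<le> integral {a..b} (\<lambda>s. exp (w s))"
    using s0 assms by (intro integral_le integrable_continuous_interval continuous_intros) auto
  finally show ?thesis .
qed

lemma log_integral_exp_le_shift:
  fixes w w' :: "real \<Rightarrow> real"
  assumes "a < b" "0 < k" "continuous_on {a..b} w" "continuous_on {a..b} w'"
    and shift: "\<And>s. s \<in> {a..b} \<Longrightarrow> w s \<le> w' s + c"
  shows "1 / k * ln (integral {a..b} (\<lambda>s. exp (k * w s)))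
    \<le> 1 / k * ln (integral {a..b} (\<lambda>s. exp (k * w' s))) + c"
proof -
  let ?I = "integral {a..b} (\<lambda>s. exp (k * w s))"
  let ?I' = "integral {a..b} (\<lambda>s. exp (k * w' s))"
  have pos: "0 < ?I" "0 < ?I'"
    using assms by (intro integral_exp_pos continuous_intros; simp)+
  have "?I \<le> integral {a..b} (\<lambda>s. exp (k * c) * exp (k * w' s))"
  proof (rule integral_le)
    fix s assume "s \<in> {a..b}"
    then have "k * w s \<le> k * c + k * w' s"
      using shift \<open>0 < k\<close> by (metis add.commute distrib_left mult_le_cancel_left_pos)
    then show "exp (k * w s) \<le> exp (k * c) * exp (k * w' s)"
      by (simp add: exp_add[symmetric])
  qed (intro integrable_continuous_interval continuous_intros assms(3,4))+
  also have "\<dots> = exp (k * c) * ?I'" by simp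
  finally have "ln ?I \<le> ln (exp (k * c) * ?I')" using pos by (intro ln_mono) auto
  also have "\<dots> = k * c + ln ?I'" using pos by (simp add: ln_mult)
  finally show ?thesis using \<open>0 < k\<close> by (simp add: field_simps)
qed

lemma log_integral_exp_bounds:
  fixes w :: "real \<Rightarrow> real"
  assumes "a < b" "0 < k" "continuous_on {a..b} w" "\<And>s. s \<in> {a..b} \<Longrightarrow> w s \<le> m"
    and "0 < \<eta>" "{c..c+\<eta>} \<subseteq> {a..b}" "\<And>s. s \<in> {c..c+\<eta>} \<Longrightarrow> m - \<delta> \<le> w s"
  shows "m - \<delta> + ln \<eta> / k \<le> 1 / k * ln (integral {a..b} (\<lambda>s. exp (k * w s)))"
    and "1 / k * ln (integral {a..b} (\<lambda>s. exp (k * w s))) \<le> m + ln (b - a) / k"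
proof -
  let ?I = "integral {a..b} (\<lambda>s. exp (k * w s))"
  have int: "(\<lambda>s. exp (k * w s)) integrable_on {c'..d'}" if "{c'..d'} \<subseteq> {a..b}" for c' d'
    by (intro integrable_continuous_interval continuous_intros continuous_on_subset[OF assms(3) that])
  have "?I \<le> integral {a..b} (\<lambda>s. exp (k * m))"
    using assms by (intro integral_le int) auto
  also have "\<dots> = (b - a) * exp (k * m)" using assms(1) by simp
  finally have "ln ?I \<le> ln ((b - a) * exp (k * m))"
    using assms by (intro ln_mono integral_exp_pos continuous_intros) auto
  then have "ln ?I \<le> ln (b - a) + k * m" using assms(1) by (simp add: ln_mult)
  then show "1 / k * ln ?I \<le> m + ln (b - a) / k"
    using assms(2) by (simp add: field_simps)
  have "\<eta> * exp (k * (m - \<delta>)) = integral {c..c+\<eta>} (\<lambda>s. exp (k * (m - \<delta>)))"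
    using assms(5) by simp
  also have "\<dots> \<le> integral {c..c+\<eta>} (\<lambda>s. exp (k * w s))"
    using assms by (intro integral_le int) auto
  also have "\<dots> \<le> ?I"
    using assms(6) by (intro integral_subset_le int) auto
  finally have "ln (\<eta> * exp (k * (m - \<delta>))) \<le> ln ?I"
    using assms(5) by (intro ln_mono) auto
  then have "ln \<eta> + k * (m - \<delta>) \<le> ln ?I" using assms(5) by (simp add: ln_mult)
  then have "(ln \<eta> + k * (m - \<delta>)) / k \<le> ln ?I / k"
    using assms(2) by (intro divide_right_mono) auto
  then show "m - \<delta> + ln \<eta> / k \<le> 1 / k * ln ?I"
    using assms(2) by (simp add: add_divide_distrib)
qed

lemma log_integral_exp_window_Sup_estimate:
  fixes w :: "real \<Rightarrow> real"
  assumes "0 < \<tau>" "0 < k" "continuous_on {t-\<tau>..t} w" "0 < \<eta>" "\<eta> \<le> \<tau>"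
    and close: "\<And>s s'. s \<in> {t-\<tau>..t} \<Longrightarrow> s' \<in> {t-\<tau>..t} \<Longrightarrow> \<bar>s - s'\<bar> \<le> \<eta> \<Longrightarrow> w s' - e \<le> w s"
  shows "\<bar>1 / k * ln (integral {t-\<tau>..t} (\<lambda>s. exp (k * w s))) - (SUP s\<in>{t-\<tau>..t}. w s)\<bar>
    \<le> e + (\<bar>ln \<tau>\<bar> + \<bar>ln \<eta>\<bar>) / k"
proof -
  obtain s0 where s0: "s0 \<in> {t-\<tau>..t}" "(SUP s\<in>{t-\<tau>..t}. w s) = w s0"
    "\<And>s. s \<in> {t-\<tau>..t} \<Longrightarrow> w s \<le> w s0"
    using continuous_on_Icc_attains_Sup[OF _ assms(3)] assms(1) by auto
  define c where "c = max (t - \<tau>) (s0 - \<eta>)"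
  have sub: "{c..c+\<eta>} \<subseteq> {t-\<tau>..t}" using s0(1) assms(5) by (auto simp: c_def)
  have near: "w s0 - e \<le> w s" if "s \<in> {c..c+\<eta>}" for s
    using that sub s0(1) by (intro close) (auto simp: c_def)
  define L where "L = 1 / k * ln (integral {t-\<tau>..t} (\<lambda>s. exp (k * w s)))"
  have lower: "w s0 - e + ln \<eta> / k \<le> L"
    unfolding L_def using assms s0(3) sub near by (intro log_integral_exp_bounds(1); simp)
  have "L \<le> w s0 + ln (t - (t - \<tau>)) / k"
    unfolding L_def
    by (rule log_integral_exp_bounds(2)[where c=c and \<eta>=\<eta> and \<delta>=e])
       (use assms s0(3) sub near in auto)
  then have upper: "L \<le> w s0 + ln \<tau> / k" by simp
  have "ln \<tau> / k \<le> \<bar>ln \<tau>\<bar> / k" "- (\<bar>ln \<eta>\<bar> / k) \<le> ln \<eta> / k"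
    using divide_right_mono[of "ln \<tau>" "\<bar>ln \<tau>\<bar>" k] divide_right_mono[of "- \<bar>ln \<eta>\<bar>" "ln \<eta>" k]
      assms(2) by simp_all
  moreover have "0 \<le> \<bar>ln \<tau>\<bar> / k" "0 \<le> \<bar>ln \<eta>\<bar> / k" using assms(2) by simp_all
  moreover have "0 \<le> e" using close[of t t] assms(1,4) by simp
  ultimately show ?thesis
    using lower upper unfolding s0(2) L_def[symmetric] abs_le_iff add_divide_distrib
    by (intro conjI; linarith)
qed

lemma uniform_limit_log_integral_exp_window:
  fixes w :: "real \<Rightarrow> real"
  assumes "0 < \<tau>" "continuous_on {-\<tau>..T} w"
  shows "uniform_limit {0..T} (\<lambda>k t. 1 / real k * ln (integral {t-\<tau>..t} (\<lambda>s. exp (real k * w s))))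
    (\<lambda>t. SUP s\<in>{t-\<tau>..t}. w s) sequentially"
  unfolding uniform_limit_iff
proof (intro allI impI)
  fix \<epsilon> :: real assume "0 < \<epsilon>"
  have "uniformly_continuous_on {-\<tau>..T} w"
    by (rule compact_uniformly_continuous[OF assms(2)]) simp
  then obtain d where "0 < d" and d: "\<And>s s'. s \<in> {-\<tau>..T} \<Longrightarrow> s' \<in> {-\<tau>..T} \<Longrightarrow>
      dist s' s < d \<Longrightarrow> dist (w s') (w s) < \<epsilon>/2"
    using \<open>0 < \<epsilon>\<close> unfolding uniformly_continuous_on_def by (meson half_gt_zero)
  define \<eta> where "\<eta> = min (d/2) \<tau>"
  have \<eta>: "0 < \<eta>" "\<eta> < d" "\<eta> \<le> \<tau>" using \<open>0 < d\<close> assms(1) by (auto simp: \<eta>_def)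
  have "(\<lambda>k. (\<bar>ln \<tau>\<bar> + \<bar>ln \<eta>\<bar>) / real k) \<longlonglongrightarrow> 0" by (rule lim_const_over_n)
  then have "\<forall>\<^sub>F k in sequentially. (\<bar>ln \<tau>\<bar> + \<bar>ln \<eta>\<bar>) / real k < \<epsilon>/2"
    using \<open>0 < \<epsilon>\<close> by (intro order_tendstoD(2)) auto
  moreover have "\<forall>\<^sub>F k in sequentially. 1 \<le> k" by (rule eventually_ge_at_top)
  ultimately show "\<forall>\<^sub>F k in sequentially. \<forall>t\<in>{0..T}.
      dist (1 / real k * ln (integral {t-\<tau>..t} (\<lambda>s. exp (real k * w s)))) (SUP s\<in>{t-\<tau>..t}. w s) < \<epsilon>"
  proof eventually_elim
    case (elim k)
    show ?case
    proof
      fix t assume t: "t \<in> {0..T}"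
      have window: "{t-\<tau>..t} \<subseteq> {-\<tau>..T}" using t by auto
      have close: "w s' - \<epsilon>/2 \<le> w s"
        if "s \<in> {t-\<tau>..t}" "s' \<in> {t-\<tau>..t}" "\<bar>s - s'\<bar> \<le> \<eta>" for s s'
      proof -
        have "dist (w s') (w s) < \<epsilon>/2" using that window \<eta> by (intro d) (auto simp: dist_real_def)
        then show ?thesis unfolding dist_real_def by arith
      qed
      have "\<bar>1 / real k * ln (integral {t-\<tau>..t} (\<lambda>s. exp (real k * w s))) - (SUP s\<in>{t-\<tau>..t}. w s)\<bar>
          \<le> \<epsilon>/2 + (\<bar>ln \<tau>\<bar> + \<bar>ln \<eta>\<bar>) / real k"
        by (intro log_integral_exp_window_Sup_estimate continuous_on_subset[OF assms(2) window])
           (use assms(1) elim \<eta> close in auto)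
      then show "dist (1 / real k * ln (integral {t-\<tau>..t} (\<lambda>s. exp (real k * w s))))
          (SUP s\<in>{t-\<tau>..t}. w s) < \<epsilon>"
        using elim unfolding dist_real_def by linarith
    qed
  qed
qed

lemma norm_LIE_diff_le:
  fixes y z :: "real \<Rightarrow> real^'n"
  assumes "1 \<le> k" "0 < \<tau>" "continuous_on {t-\<tau>..t} y" "continuous_on {t-\<tau>..t} z"
    and close: "\<And>s. s \<in> {t-\<tau>..t} \<Longrightarrow> norm (y s - z s) \<le> c"
  shows "norm (LIE k \<tau> y t - LIE k \<tau> z t) \<le> real CARD('n) * c"
proof (rule norm_le_card_cart)
  fix i
  have close_i: "\<bar>y s $ i - z s $ i\<bar> \<le> c" if "s \<in> {t-\<tau>..t}" for s
    using close[OF that] component_le_norm_cart[of "y s - z s" i] by simp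
  have "LIE k \<tau> y t $ i \<le> LIE k \<tau> z t $ i + c" "LIE k \<tau> z t $ i \<le> LIE k \<tau> y t $ i + c"
    unfolding LIE_def vec_lambda_beta using assms close_i
    by (intro log_integral_exp_le_shift continuous_intros; force)+
  then show "\<bar>(LIE k \<tau> y t - LIE k \<tau> z t) $ i\<bar> \<le> c" by simp
qed

lemma uniform_limit_LIE_max_hist:
  assumes "0 < \<tau>" "continuous_on {-\<tau>..T} x"
  shows "uniform_limit {0..T} (\<lambda>k. LIE k \<tau> x) (max_hist \<tau> x) sequentially"
proof (rule uniform_limit_cart_componentwise)
  fix i
  show "uniform_limit {0..T} (\<lambda>k t. LIE k \<tau> x t $ i) (\<lambda>t. max_hist \<tau> x t $ i) sequentially"
    unfolding LIE_def max_hist_def vec_lambda_beta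
    by (intro uniform_limit_log_integral_exp_window assms(1) continuous_on_component assms(2))
qed

section \<open>Primitives of weakly convergent controls\<close>

lemma continuous_on_Icc_norm_bound:
  fixes A :: "real \<Rightarrow> 'a::real_normed_vector"
  assumes "continuous_on {a..b} A"
  obtains B where "0 < B" "\<And>s. s \<in> {a..b} \<Longrightarrow> norm (A s) \<le> B"
  using compact_imp_bounded[OF compact_continuous_image[OF assms compact_Icc]] that
  unfolding bounded_pos by blast

lemma integrable_continuous_matrix_vector_mult:
  fixes A :: "real \<Rightarrow> real^'m^'n" and f :: "real \<Rightarrow> real^'m"
  assumes A: "continuous_on {a..b} A" and f: "integrable (lebesgue_on {a..b}) f"
  shows "integrable (lebesgue_on {a..b}) (\<lambda>s. A s *v f s)"
proof -
  obtain B where B: "0 < B" "\<And>s. s \<in> {a..b} \<Longrightarrow> norm (A s) \<le> B"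
    using continuous_on_Icc_norm_bound[OF A] by blast
  have A_meas: "A \<in> borel_measurable (lebesgue_on {a..b})"
    by (rule continuous_imp_measurable_on_sets_lebesgue[OF A]) simp
  have meas: "(\<lambda>s. A s *v f s) \<in> borel_measurable (lebesgue_on {a..b})"
    using borel_measurable_bilinear[OF bilinear_matrix_vector_mult A_meas
        borel_measurable_integrable[OF f]] by simp
  have int: "integrable (lebesgue_on {a..b}) (\<lambda>s. real CARD('n) * B * norm (f s))"
    using f by simp
  have bound: "norm (A s *v f s) \<le> norm (real CARD('n) * B * norm (f s))" if "s \<in> {a..b}" for s
  proof -
    have "norm (A s *v f s) \<le> real CARD('n) * norm (A s) * norm (f s)"
      by (rule norm_matrix_vector_mult_le)
    also have "\<dots> \<le> real CARD('n) * B * norm (f s)"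
      using B that by (intro mult_right_mono mult_left_mono) auto
    finally show ?thesis using B by simp
  qed
  show ?thesis
    using bound by (intro Bochner_Integration.integrable_bound[OF int meas] AE_lebesgue_onI)
qed

lemma integral_lebesgue_on_subinterval_indicator:
  fixes h :: "real \<Rightarrow> real"
  assumes "{c..d} \<subseteq> {a..b}"
  shows "integral\<^sup>L (lebesgue_on {c..d}) h
    = integral\<^sup>L (lebesgue_on {a..b}) (\<lambda>s. indicator {c..d} s * h s)"
proof -
  have "integral\<^sup>L (lebesgue_on {c..d}) h = integral\<^sup>L lebesgue (\<lambda>s. indicator {c..d} s *\<^sub>R h s)"
    by (rule integral_restrict_space) simp
  also have "\<dots> = integral\<^sup>L lebesgue (\<lambda>s. indicator {a..b} s *\<^sub>R (indicator {c..d} s * h s))"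
    using assms by (intro Bochner_Integration.integral_cong) (auto simp: indicator_def)
  also have "\<dots> = integral\<^sup>L (lebesgue_on {a..b}) (\<lambda>s. indicator {c..d} s * h s)"
    by (rule integral_restrict_space[symmetric]) simp
  finally show ?thesis .
qed

text \<open>Testing the weak convergence with the rows of \<open>A\<close>, cut off at \<open>t\<close>.\<close>

lemma tendsto_integral_matrix_vector_mult_weak:
  fixes A :: "real \<Rightarrow> real^'m^'n" and v :: "nat \<Rightarrow> real \<Rightarrow> real^'m"
  assumes A: "continuous_on {a..b} A" and t: "t \<in> {a..b}"
    and v_int: "\<And>k. integrable (lebesgue_on {a..b}) (v k)"
    and w_int: "integrable (lebesgue_on {a..b}) w"
    and weak: "\<And>g :: real \<Rightarrow> real^'m. g \<in> borel_measurable (lebesgue_on {a..b}) \<Longrightarrow>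
      (\<exists>B. AE s in lebesgue_on {a..b}. norm (g s) \<le> B) \<Longrightarrow>
      (\<lambda>k. integral\<^sup>L (lebesgue_on {a..b}) (\<lambda>s. v k s \<bullet> g s))
        \<longlonglongrightarrow> integral\<^sup>L (lebesgue_on {a..b}) (\<lambda>s. w s \<bullet> g s)"
  shows "(\<lambda>k. integral\<^sup>L (lebesgue_on {a..t}) (\<lambda>s. A s *v v k s))
    \<longlonglongrightarrow> integral\<^sup>L (lebesgue_on {a..t}) (\<lambda>s. A s *v w s)"
proof (rule vec_tendstoI)
  fix i
  have sub: "{a..t} \<subseteq> {a..b}" using t by auto
  have A_t: "continuous_on {a..t} A" by (rule continuous_on_subset[OF A sub])
  define g where "g s = indicator {a..t} s *\<^sub>R A s $ i" for s
  obtain B where B: "0 < B" "\<And>s. s \<in> {a..b} \<Longrightarrow> norm (A s) \<le> B"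
    using continuous_on_Icc_norm_bound[OF A] by blast
  have g_meas: "g \<in> borel_measurable (lebesgue_on {a..b})"
  proof -
    have "(\<lambda>s. A s $ i) \<in> borel_measurable (lebesgue_on {a..b})"
      by (intro continuous_imp_measurable_on_sets_lebesgue continuous_on_component A) simp
    moreover have "{a..t} \<in> sets (lebesgue_on {a..b})"
      using sub by (simp add: sets_restrict_space_iff)
    ultimately show ?thesis unfolding g_def by (intro borel_measurable_scaleR borel_measurable_indicator)
  qed
  have g_bdd: "\<exists>B. AE s in lebesgue_on {a..b}. norm (g s) \<le> B"
  proof (intro exI AE_lebesgue_onI)
    fix s assume "s \<in> {a..b}"
    have "norm (g s) \<le> norm (A s $ i)" by (simp add: g_def indicator_def)
    also have "\<dots> \<le> norm (A s)" by (rule Finite_Cartesian_Product.norm_nth_le)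
    finally show "norm (g s) \<le> B" using B(2)[OF \<open>s \<in> {a..b}\<close>] by linarith
  qed
  have row: "integral\<^sup>L (lebesgue_on {a..t}) (\<lambda>s. A s *v f s) $ i
      = integral\<^sup>L (lebesgue_on {a..b}) (\<lambda>s. f s \<bullet> g s)"
    if "integrable (lebesgue_on {a..b}) f" for f
  proof -
    have "integrable (lebesgue_on {a..t}) (\<lambda>s. A s *v f s)"
      by (intro integrable_continuous_matrix_vector_mult A_t integrable_subinterval[OF that sub])
    then have "integral\<^sup>L (lebesgue_on {a..t}) (\<lambda>s. A s *v f s) $ i
        = integral\<^sup>L (lebesgue_on {a..t}) (\<lambda>s. (A s *v f s) $ i)"
      by (rule integral_bounded_linear[OF bounded_linear_vec_nth, symmetric])
    also have "\<dots> = integral\<^sup>L (lebesgue_on {a..t}) (\<lambda>s. f s \<bullet> A s $ i)"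
      by (simp add: matrix_mult_dot inner_commute)
    also have "\<dots> = integral\<^sup>L (lebesgue_on {a..b}) (\<lambda>s. f s \<bullet> g s)"
      by (simp add: integral_lebesgue_on_subinterval_indicator[OF sub] g_def)
    finally show ?thesis .
  qed
  show "(\<lambda>k. integral\<^sup>L (lebesgue_on {a..t}) (\<lambda>s. A s *v v k s) $ i)
      \<longlonglongrightarrow> integral\<^sup>L (lebesgue_on {a..t}) (\<lambda>s. A s *v w s) $ i"
    unfolding row[OF v_int] row[OF w_int] by (rule weak[OF g_meas g_bdd])
qed

lemma continuous_on_integral_lebesgue_on:
  fixes g :: "real \<Rightarrow> 'b::euclidean_space"
  assumes "integrable (lebesgue_on {a..b}) g"
  shows "continuous_on {a..b} (\<lambda>t. integral\<^sup>L (lebesgue_on {a..t}) g)"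
proof (rule continuous_on_eq)
  show "continuous_on {a..b} (\<lambda>t. integral {a..t} g)"
    by (intro indefinite_integral_continuous_1 integrable_on_lebesgue_on[OF assms]) simp
  show "integral {a..t} g = integral\<^sup>L (lebesgue_on {a..t}) g" if "t \<in> {a..b}" for t
    using that
    by (intro lebesgue_integral_eq_integral[symmetric] integrable_subinterval[OF assms]) auto
qed

lemma norm_integral_lebesgue_on_increment_le:
  fixes f :: "real \<Rightarrow> 'b::euclidean_space"
  assumes f: "integrable (lebesgue_on {a..b}) f" and g: "integrable (lebesgue_on {a..b}) g"
    and bound: "AE s in lebesgue_on {a..b}. norm (f s) \<le> g s"
    and st: "a \<le> s" "s \<le> t" "t \<le> b"
  shows "norm (integral\<^sup>L (lebesgue_on {a..t}) f - integral\<^sup>L (lebesgue_on {a..s}) f)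
    \<le> integral\<^sup>L (lebesgue_on {a..t}) g - integral\<^sup>L (lebesgue_on {a..s}) g"
proof -
  have sub: "{a..t} \<subseteq> {a..b}" "{s..t} \<subseteq> {a..b}" using st by auto
  have "integral\<^sup>L (lebesgue_on {a..t}) f - integral\<^sup>L (lebesgue_on {a..s}) f
      = integral\<^sup>L (lebesgue_on {s..t}) f"
    using Equivalence_Measurable_On_Borel.integral_combine[OF integrable_subinterval[OF f sub(1)], of s]
      st by simp
  moreover have "integral\<^sup>L (lebesgue_on {a..t}) g - integral\<^sup>L (lebesgue_on {a..s}) g
      = integral\<^sup>L (lebesgue_on {s..t}) g"
    using Equivalence_Measurable_On_Borel.integral_combine[OF integrable_subinterval[OF g sub(1)], of s]
      st by simp
  moreover have "norm (integral\<^sup>L (lebesgue_on {s..t}) f) \<le> integral\<^sup>L (lebesgue_on {s..t}) g"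
  proof -
    have "AE s in lebesgue_on {s..t}. norm (f s) \<le> g s"
      by (rule AE_lebesgue_on_subset[OF bound sub(2)]) simp_all
    then have "integral\<^sup>L (lebesgue_on {s..t}) (\<lambda>s. norm (f s)) \<le> integral\<^sup>L (lebesgue_on {s..t}) g"
      by (intro integral_mono_AE integrable_norm integrable_subinterval[OF _ sub(2)] f g)
    then show ?thesis using integral_norm_bound order_trans by blast
  qed
  ultimately show ?thesis by simp
qed

lemma norm_integral_lebesgue_on_diff_le:
  fixes f :: "real \<Rightarrow> 'b::euclidean_space"
  assumes f: "integrable (lebesgue_on {a..b}) f" and g: "integrable (lebesgue_on {a..b}) g"
    and bound: "AE s in lebesgue_on {a..b}. norm (f s) \<le> g s"
    and "s \<in> {a..b}" "t \<in> {a..b}"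
  shows "norm (integral\<^sup>L (lebesgue_on {a..s}) f - integral\<^sup>L (lebesgue_on {a..t}) f)
    \<le> \<bar>integral\<^sup>L (lebesgue_on {a..s}) g - integral\<^sup>L (lebesgue_on {a..t}) g\<bar>"
proof (cases "s \<le> t")
  case True
  then have "norm (integral\<^sup>L (lebesgue_on {a..s}) f - integral\<^sup>L (lebesgue_on {a..t}) f)
      \<le> integral\<^sup>L (lebesgue_on {a..t}) g - integral\<^sup>L (lebesgue_on {a..s}) g"
    using norm_integral_lebesgue_on_increment_le[OF f g bound, of s t] assms(4,5)
    by (simp add: norm_minus_commute)
  then show ?thesis by arith
next
  case False
  then have "norm (integral\<^sup>L (lebesgue_on {a..s}) f - integral\<^sup>L (lebesgue_on {a..t}) f)
      \<le> integral\<^sup>L (lebesgue_on {a..s}) g - integral\<^sup>L (lebesgue_on {a..t}) g"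
    using norm_integral_lebesgue_on_increment_le[OF f g bound, of t s] assms(4,5) by simp
  then show ?thesis by arith
qed

lemma uniform_limit_zero_common_modulus:
  fixes r :: "nat \<Rightarrow> real \<Rightarrow> 'a::real_normed_vector"
  assumes V: "continuous_on {a..b} V"
    and modulus: "\<And>k s t. s \<in> {a..b} \<Longrightarrow> t \<in> {a..b} \<Longrightarrow> norm (r k s - r k t) \<le> \<bar>V s - V t\<bar>"
    and lim: "\<And>t. t \<in> {a..b} \<Longrightarrow> (\<lambda>k. r k t) \<longlonglongrightarrow> 0"
  shows "uniform_limit {a..b} r (\<lambda>_. 0) sequentially"
  unfolding uniform_limit_iff
proof (intro allI impI)
  fix \<epsilon> :: real assume "0 < \<epsilon>"
  have "uniformly_continuous_on {a..b} V"
    by (rule compact_uniformly_continuous[OF V]) simp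
  then obtain d where "0 < d" and d: "\<And>s s'. s \<in> {a..b} \<Longrightarrow> s' \<in> {a..b} \<Longrightarrow>
      dist s' s < d \<Longrightarrow> dist (V s') (V s) < \<epsilon>/2"
    using \<open>0 < \<epsilon>\<close> unfolding uniformly_continuous_on_def by (meson half_gt_zero)
  have cover: "{a..b} \<subseteq> (\<Union>c\<in>{a..b}. ball c d)" using \<open>0 < d\<close> by auto
  obtain C where C: "C \<subseteq> {a..b}" "finite C" "{a..b} \<subseteq> (\<Union>c\<in>C. ball c d)"
    using compactE_image[OF compact_Icc _ cover] by blast
  have "\<forall>\<^sub>F k in sequentially. \<forall>c\<in>C. norm (r k c) < \<epsilon>/2"
  proof (rule eventually_ball_finite[OF C(2)], rule ballI)
    fix c assume "c \<in> C"
    then have "(\<lambda>k. norm (r k c)) \<longlonglongrightarrow> 0"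
      using C(1) lim tendsto_norm_zero by blast
    then show "\<forall>\<^sub>F k in sequentially. norm (r k c) < \<epsilon>/2"
      using \<open>0 < \<epsilon>\<close> by (intro order_tendstoD(2)) auto
  qed
  then show "\<forall>\<^sub>F k in sequentially. \<forall>t\<in>{a..b}. dist (r k t) 0 < \<epsilon>"
  proof eventually_elim
    case (elim k)
    show ?case
    proof
      fix t assume t: "t \<in> {a..b}"
      obtain c where c: "c \<in> C" "dist c t < d" using C(3) t by auto
      have "norm (r k t - r k c) \<le> \<bar>V t - V c\<bar>" using C(1) c t by (intro modulus) auto
      moreover have "\<bar>V t - V c\<bar> < \<epsilon>/2"
        using d[of c t] C(1) c t by (auto simp: dist_real_def abs_minus_commute)
      moreover have "norm (r k c) < \<epsilon>/2" using elim c(1) by blast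
      ultimately show "dist (r k t) 0 < \<epsilon>"
        using norm_triangle_sub[of "r k t" "r k c"] by simp
    qed
  qed
qed

lemma matrix_vector_mult_diff_majorant:
  fixes A :: "real \<Rightarrow> real^'m^'n" and v :: "nat \<Rightarrow> real \<Rightarrow> real^'m"
  assumes A: "continuous_on {a..b} A"
    and v_bdd: "\<And>k. AE s in lebesgue_on {a..b}. norm (v k s) \<le> M"
    and w_int: "integrable (lebesgue_on {a..b}) w"
  shows "\<exists>g. integrable (lebesgue_on {a..b}) g \<and>
    (\<forall>k. AE s in lebesgue_on {a..b}. norm (A s *v (v k s - w s)) \<le> g s)"
proof -
  obtain B where B: "0 < B" "\<And>s. s \<in> {a..b} \<Longrightarrow> norm (A s) \<le> B"
    using continuous_on_Icc_norm_bound[OF A] by blast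
  define g where "g s = real CARD('n) * B * (M + norm (w s))" for s
  have "integrable (lebesgue_on {a..b}) g"
    unfolding g_def using w_int by (intro integrable_mult_right Bochner_Integration.integrable_add) auto
  moreover have "AE s in lebesgue_on {a..b}. norm (A s *v (v k s - w s)) \<le> g s" for k
    using v_bdd[of k] AE_space
  proof eventually_elim
    case (elim s)
    have "norm (A s *v (v k s - w s)) \<le> real CARD('n) * norm (A s) * norm (v k s - w s)"
      by (rule norm_matrix_vector_mult_le)
    also have "\<dots> \<le> g s"
      unfolding g_def using elim B(1) B(2)[of s] norm_triangle_ineq4[of "v k s" "w s"]
      by (intro mult_mono mult_left_mono) auto
    finally show ?case .
  qed
  ultimately show ?thesis by blast
qed

lemma uniform_limit_integral_matrix_vector_mult_weak:
  fixes A :: "real \<Rightarrow> real^'m^'n" and v :: "nat \<Rightarrow> real \<Rightarrow> real^'m"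
  assumes A: "continuous_on {a..b} A"
    and v_meas: "\<And>k. v k \<in> borel_measurable (lebesgue_on {a..b})"
    and v_bdd: "\<And>k. AE s in lebesgue_on {a..b}. norm (v k s) \<le> M"
    and w_int: "integrable (lebesgue_on {a..b}) w"
    and weak: "\<And>g :: real \<Rightarrow> real^'m. g \<in> borel_measurable (lebesgue_on {a..b}) \<Longrightarrow>
      (\<exists>B. AE s in lebesgue_on {a..b}. norm (g s) \<le> B) \<Longrightarrow>
      (\<lambda>k. integral\<^sup>L (lebesgue_on {a..b}) (\<lambda>s. v k s \<bullet> g s))
        \<longlonglongrightarrow> integral\<^sup>L (lebesgue_on {a..b}) (\<lambda>s. w s \<bullet> g s)"
  shows "integrable (lebesgue_on {a..b}) (\<lambda>s. A s *v (v k s - w s))"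
    and "uniform_limit {a..b} (\<lambda>k t. integral\<^sup>L (lebesgue_on {a..t}) (\<lambda>s. A s *v (v k s - w s)))
      (\<lambda>_. 0) sequentially"
proof -
  have v_int: "integrable (lebesgue_on {a..b}) (v k)" for k
    by (rule finite_measure.integrable_const_bound[OF _ v_bdd v_meas])
       (simp add: finite_measure_lebesgue_on)
  have P_int: "integrable (lebesgue_on {a..b}) (\<lambda>s. A s *v (v k s - w s))" for k
    using v_int w_int by (intro integrable_continuous_matrix_vector_mult A) auto
  then show "integrable (lebesgue_on {a..b}) (\<lambda>s. A s *v (v k s - w s))" .
  have "\<exists>g. integrable (lebesgue_on {a..b}) g \<and>
      (\<forall>k. AE s in lebesgue_on {a..b}. norm (A s *v (v k s - w s)) \<le> g s)"
    by (rule matrix_vector_mult_diff_majorant[OF A v_bdd w_int])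
  then obtain g where g_int: "integrable (lebesgue_on {a..b}) g"
    and P_bound: "\<forall>k. AE s in lebesgue_on {a..b}. norm (A s *v (v k s - w s)) \<le> g s"
    by blast
  show "uniform_limit {a..b} (\<lambda>k t. integral\<^sup>L (lebesgue_on {a..t}) (\<lambda>s. A s *v (v k s - w s)))
      (\<lambda>_. 0) sequentially"
  proof (rule uniform_limit_zero_common_modulus)
    show "continuous_on {a..b} (\<lambda>t. integral\<^sup>L (lebesgue_on {a..t}) g)"
      by (rule continuous_on_integral_lebesgue_on[OF g_int])
    show "norm (integral\<^sup>L (lebesgue_on {a..s}) (\<lambda>\<sigma>. A \<sigma> *v (v k \<sigma> - w \<sigma>))
        - integral\<^sup>L (lebesgue_on {a..t}) (\<lambda>\<sigma>. A \<sigma> *v (v k \<sigma> - w \<sigma>)))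
      \<le> \<bar>integral\<^sup>L (lebesgue_on {a..s}) g - integral\<^sup>L (lebesgue_on {a..t}) g\<bar>"
      if "s \<in> {a..b}" "t \<in> {a..b}" for k s t
      by (rule norm_integral_lebesgue_on_diff_le[OF P_int g_int spec[OF P_bound] that])
    show "(\<lambda>k. integral\<^sup>L (lebesgue_on {a..t}) (\<lambda>s. A s *v (v k s - w s))) \<longlonglongrightarrow> 0"
      if t: "t \<in> {a..b}" for t
    proof -
      have sub: "{a..t} \<subseteq> {a..b}" using t by auto
      have "integral\<^sup>L (lebesgue_on {a..t}) (\<lambda>s. A s *v (v k s - w s))
          = integral\<^sup>L (lebesgue_on {a..t}) (\<lambda>s. A s *v v k s)
            - integral\<^sup>L (lebesgue_on {a..t}) (\<lambda>s. A s *v w s)" for k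
        unfolding matrix_vector_mult_diff_distrib
        by (intro Bochner_Integration.integral_diff integrable_continuous_matrix_vector_mult
            continuous_on_subset[OF A sub] integrable_subinterval[OF _ sub] v_int w_int)
      moreover have "(\<lambda>k. integral\<^sup>L (lebesgue_on {a..t}) (\<lambda>s. A s *v v k s))
          \<longlonglongrightarrow> integral\<^sup>L (lebesgue_on {a..t}) (\<lambda>s. A s *v w s)"
        by (rule tendsto_integral_matrix_vector_mult_weak[OF A t v_int w_int weak])
      ultimately show ?thesis by (simp add: LIM_zero)
    qed
  qed
qed

section \<open>The error estimate\<close>

text \<open>Gronwall's inequality in the form used for delay equations: the error is compared with
  \<open>W * exp (lam * s)\<close>, where \<open>W\<close> is the maximum of \<open>exp (- lam * s) * e s\<close>; the weight
  absorbs the integral term once \<open>lam \<ge> 2 * C\<close>.\<close>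

lemma exp_weighted_gronwall:
  fixes e :: "real \<Rightarrow> real"
  assumes cont: "continuous_on {0..T} e" and "0 \<le> T" and nonneg: "\<And>s. s \<in> {0..T} \<Longrightarrow> 0 \<le> e s"
    and lam: "0 < lam" "2 * C \<le> lam" and "0 \<le> C"
    and bound: "\<And>W s. 0 \<le> W \<Longrightarrow> (\<And>s. s \<in> {0..T} \<Longrightarrow> e s \<le> W * exp (lam * s)) \<Longrightarrow>
      s \<in> {0..T} \<Longrightarrow> e s \<le> C * W * (exp (lam * s) - 1) / lam + R"
    and t: "t \<in> {0..T}"
  shows "e t \<le> R * exp (lam * T)"
proof -
  have weighted: "continuous_on {0..T} (\<lambda>s. exp (- lam * s) * e s)"
    by (intro continuous_intros cont)
  have "\<exists>s1\<in>{0..T}. \<forall>s\<in>{0..T}. exp (- lam * s) * e s \<le> exp (- lam * s1) * e s1"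
    using continuous_attains_sup[OF compact_Icc _ weighted] \<open>0 \<le> T\<close> by simp
  then obtain s1 where s1: "s1 \<in> {0..T}"
    "\<And>s. s \<in> {0..T} \<Longrightarrow> exp (- lam * s) * e s \<le> exp (- lam * s1) * e s1"
    by blast
  define W where "W = exp (- lam * s1) * e s1"
  have "0 \<le> W" using nonneg s1(1) by (simp add: W_def)
  have unweight: "exp (- lam * s) * e s * exp (lam * s) = e s" for s
    by (simp add: exp_minus)
  have e_le: "e s \<le> W * exp (lam * s)" if "s \<in> {0..T}" for s
  proof -
    have "e s = exp (- lam * s) * e s * exp (lam * s)" by (rule unweight[symmetric])
    also have "\<dots> \<le> W * exp (lam * s)"
      unfolding W_def by (rule mult_right_mono[OF s1(2)[OF that]]) simp
    finally show ?thesis .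
  qed
  have W_s1: "W * exp (lam * s1) = e s1" unfolding W_def by (rule unweight)
  have "W * exp (lam * s1) \<le> C * W * (exp (lam * s1) - 1) / lam + R"
    unfolding W_s1 by (rule bound[OF \<open>0 \<le> W\<close> e_le s1(1)])
  moreover have "C * W * (exp (lam * s1) - 1) / lam \<le> (W * exp (lam * s1) - W) / 2"
  proof -
    have "1 \<le> exp (lam * s1)" using lam s1(1) by simp
    then have "0 \<le> W * (exp (lam * s1) - 1)" using \<open>0 \<le> W\<close> by simp
    moreover have "C / lam \<le> 1 / 2" using lam by (simp add: field_simps)
    moreover have "C * W * (exp (lam * s1) - 1) / lam = C / lam * (W * (exp (lam * s1) - 1))"
      by simp
    ultimately have "C * W * (exp (lam * s1) - 1) / lam \<le> 1 / 2 * (W * (exp (lam * s1) - 1))"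
      using mult_right_mono by metis
    also have "\<dots> = (W * exp (lam * s1) - W) / 2" by (simp add: algebra_simps)
    finally show ?thesis .
  qed
  moreover have "W \<le> W * exp (lam * s1)"
    using \<open>0 \<le> W\<close> lam s1(1) by (simp add: mult_le_cancel_left1)
  moreover have "W \<le> R" if "A \<le> Q + R" "Q \<le> (A - W) / 2" "W \<le> A" for A Q
    using that by simp
  ultimately have "W \<le> R" by blast
  have "e t \<le> W * exp (lam * t)" by (rule e_le[OF t])
  also have "\<dots> \<le> R * exp (lam * T)"
    using \<open>W \<le> R\<close> \<open>0 \<le> W\<close> lam t by (intro mult_mono) auto
  finally show ?thesis .
qed

lemma norm_integral_le_exp_affine:
  fixes H :: "real \<Rightarrow> 'b::euclidean_space"
  assumes H: "integrable (lebesgue_on {0..t}) H" and "0 \<le> t" "0 < lam"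
    and bound: "AE s in lebesgue_on {0..t}. norm (H s) \<le> a * exp (lam * s) + b"
  shows "norm (integral\<^sup>L (lebesgue_on {0..t}) H) \<le> a * (exp (lam * t) - 1) / lam + b * t"
proof -
  have int: "integrable (lebesgue_on {0..t}) (\<lambda>s. a * exp (lam * s) + b)"
    by (intro continuous_imp_integrable_real continuous_intros)
  have "((\<lambda>s. a * exp (lam * s) + b) has_integral
      (a * exp (lam * t) / lam + b * t) - (a * exp (lam * 0) / lam + b * 0)) {0..t}"
  proof (rule fundamental_theorem_of_calculus)
    fix s assume "s \<in> {0..t}"
    show "((\<lambda>s. a * exp (lam * s) / lam + b * s) has_vector_derivative a * exp (lam * s) + b)
        (at s within {0..t})"
      unfolding has_real_derivative_iff_has_vector_derivative[symmetric]
      using \<open>0 < lam\<close> by (auto intro!: derivative_eq_intros)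
  qed (use \<open>0 \<le> t\<close> in simp)
  then have integral_bound_eq: "integral\<^sup>L (lebesgue_on {0..t}) (\<lambda>s. a * exp (lam * s) + b)
      = a * (exp (lam * t) - 1) / lam + b * t"
    using lebesgue_integral_eq_integral[OF int] by (simp add: integral_unique diff_divide_distrib right_diff_distrib)
  have "norm (integral\<^sup>L (lebesgue_on {0..t}) H) \<le> integral\<^sup>L (lebesgue_on {0..t}) (\<lambda>s. norm (H s))"
    by (rule integral_norm_bound)
  also have "\<dots> \<le> integral\<^sup>L (lebesgue_on {0..t}) (\<lambda>s. a * exp (lam * s) + b)"
    by (rule integral_mono_AE[OF integrable_norm[OF H] int bound])
  finally show ?thesis unfolding integral_bound_eq .
qed

lemma dde_solution_integral:
  assumes sol: "dde_solution \<tau> T \<phi> G y" and "0 \<le> \<tau>" and t: "t \<in> {0..T}"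
  shows "integrable (lebesgue_on {0..t}) (G y)"
    and "y t = \<phi> 0 + integral\<^sup>L (lebesgue_on {0..t}) (G y)"
proof -
  obtain L where "L-lipschitz_on {0..T} y"
    using sol unfolding dde_solution_def by blast
  then have lip: "L-lipschitz_on {0..t} y"
    by (rule lipschitz_on_subset) (use t in auto)
  have "AE s in lebesgue_on {0..T}. (y has_vector_derivative G y s) (at s)"
    using sol unfolding dde_solution_def by blast
  then have der: "AE s in lebesgue_on {0..t}. (y has_vector_derivative G y s) (at s)"
    by (rule AE_lebesgue_on_subset) (use t in auto)
  have "y 0 = \<phi> 0"
    using sol \<open>0 \<le> \<tau>\<close> unfolding dde_solution_def by auto
  then show "integrable (lebesgue_on {0..t}) (G y)"
    and "y t = \<phi> 0 + integral\<^sup>L (lebesgue_on {0..t}) (G y)"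
    using lipschitz_ae_derivative_integral[OF _ lip der] t by auto
qed

lemma dde_solutions_diff_integral:
  assumes y: "dde_solution \<tau> T \<phi> G y" and z: "dde_solution \<tau> T \<phi> G' z" and "0 \<le> \<tau>"
    and s: "s \<in> {0..T}" and P: "integrable (lebesgue_on {0..s}) P"
  shows "integrable (lebesgue_on {0..s}) (\<lambda>\<sigma>. G y \<sigma> - G' z \<sigma> - P \<sigma>)"
    and "y s - z s = integral\<^sup>L (lebesgue_on {0..s}) (\<lambda>\<sigma>. G y \<sigma> - G' z \<sigma> - P \<sigma>)
      + integral\<^sup>L (lebesgue_on {0..s}) P"
  using dde_solution_integral[OF y \<open>0 \<le> \<tau>\<close> s] dde_solution_integral[OF z \<open>0 \<le> \<tau>\<close> s] P by auto

lemma dde_solution_error_window: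
  assumes y: "dde_solution \<tau> T \<phi> G y" and z: "dde_solution \<tau> T \<phi> G' z"
    and "0 \<le> W" "0 \<le> lam" and le: "\<And>s. s \<in> {0..T} \<Longrightarrow> norm (y s - z s) \<le> W * exp (lam * s)"
    and s: "s \<in> {0..T}" and \<sigma>: "\<sigma> \<in> {s-\<tau>..s}"
  shows "norm (y \<sigma> - z \<sigma>) \<le> W * exp (lam * s)"
proof (cases "\<sigma> < 0")
  case True
  then have "y \<sigma> = z \<sigma>" using y z s \<sigma> unfolding dde_solution_def by auto
  then show ?thesis using \<open>0 \<le> W\<close> by simp
next
  case False
  then have "norm (y \<sigma> - z \<sigma>) \<le> W * exp (lam * \<sigma>)" using s \<sigma> by (intro le) auto
  also have "\<dots> \<le> W * exp (lam * s)"
    using \<open>0 \<le> W\<close> \<open>0 \<le> lam\<close> \<sigma> by (intro mult_left_mono) (auto intro: mult_left_mono)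
  finally show ?thesis .
qed

lemma norm_LIE_field_diff_le:
  fixes F0 :: "real^'n \<Rightarrow> real^'n \<Rightarrow> real^'n" and F1 :: "real^'n \<Rightarrow> real^'n \<Rightarrow> real^'m^'n"
  assumes F: "\<And>a b a' b' u. norm u \<le> M \<Longrightarrow>
      norm (F0 a b - F0 a' b' + (F1 a b - F1 a' b') *v u) \<le> C * (norm (a - a') + norm (b - b'))"
    and "0 \<le> C" "norm u \<le> M" "1 \<le> k" "0 < \<tau>"
    and "continuous_on {s-\<tau>..s} y" "continuous_on {s-\<tau>..s} z"
    and window: "\<And>\<sigma>. \<sigma> \<in> {s-\<tau>..s} \<Longrightarrow> norm (y \<sigma> - z \<sigma>) \<le> \<rho>"
    and LIE_close: "norm (LIE k \<tau> z s - max_hist \<tau> z s) \<le> \<delta>"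
  shows "norm (F0 (y s) (LIE k \<tau> y s) - F0 (z s) (max_hist \<tau> z s)
      + (F1 (y s) (LIE k \<tau> y s) - F1 (z s) (max_hist \<tau> z s)) *v u)
    \<le> C * (1 + real CARD('n)) * \<rho> + C * \<delta>"
proof -
  have "norm (LIE k \<tau> y s - LIE k \<tau> z s) \<le> real CARD('n) * \<rho>"
    using assms(4-8) by (rule norm_LIE_diff_le)
  then have "norm (LIE k \<tau> y s - max_hist \<tau> z s) \<le> real CARD('n) * \<rho> + \<delta>"
    using norm_diff_triangle_le LIE_close by blast
  moreover have "norm (y s - z s) \<le> \<rho>" using window \<open>0 < \<tau>\<close> by simp
  ultimately have "C * (norm (y s - z s) + norm (LIE k \<tau> y s - max_hist \<tau> z s))
      \<le> C * (\<rho> + (real CARD('n) * \<rho> + \<delta>))"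
    using \<open>0 \<le> C\<close> by (intro mult_left_mono add_mono) auto
  also have "\<dots> = C * (1 + real CARD('n)) * \<rho> + C * \<delta>" by (simp add: algebra_simps)
  finally show ?thesis using F[OF \<open>norm u \<le> M\<close>] by (rule order_trans[rotated])
qed

lemma LIE_dde_solution_error:
  fixes F0 :: "real^'n \<Rightarrow> real^'n \<Rightarrow> real^'n" and F1 :: "real^'n \<Rightarrow> real^'n \<Rightarrow> real^'m^'n"
  assumes "0 < \<tau>" "1 \<le> k"
    and F: "\<And>a b a' b' u. norm u \<le> M \<Longrightarrow>
      norm (F0 a b - F0 a' b' + (F1 a b - F1 a' b') *v u) \<le> C * (norm (a - a') + norm (b - b'))"
    and "0 \<le> C" and lam: "0 < lam" "2 * (C * (1 + real CARD('n))) \<le> lam"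
    and v_bdd: "AE s in lebesgue_on {0..T}. norm (v s) \<le> M"
    and y: "dde_solution \<tau> T \<phi> (\<lambda>y t. F0 (y t) (LIE k \<tau> y t) + F1 (y t) (LIE k \<tau> y t) *v v t) y"
    and z: "dde_solution \<tau> T \<phi> (\<lambda>y t. F0 (y t) (max_hist \<tau> y t) + F1 (y t) (max_hist \<tau> y t) *v w t) z"
    and P_int: "integrable (lebesgue_on {0..T}) (\<lambda>s. F1 (z s) (max_hist \<tau> z s) *v (v s - w s))"
    and LIE_close: "\<And>s. s \<in> {0..T} \<Longrightarrow> norm (LIE k \<tau> z s - max_hist \<tau> z s) \<le> \<delta>"
    and P_small: "\<And>s. s \<in> {0..T} \<Longrightarrow>
      norm (integral\<^sup>L (lebesgue_on {0..s}) (\<lambda>\<sigma>. F1 (z \<sigma>) (max_hist \<tau> z \<sigma>) *v (v \<sigma> - w \<sigma>))) \<le> \<delta>"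
    and t: "t \<in> {0..T}"
  shows "norm (y t - z t) \<le> (C * T + 1) * \<delta> * exp (lam * T)"
proof -
  define Gy where "Gy = (\<lambda>s. F0 (y s) (LIE k \<tau> y s) + F1 (y s) (LIE k \<tau> y s) *v v s)"
  define Gz where "Gz = (\<lambda>s. F0 (z s) (max_hist \<tau> z s) + F1 (z s) (max_hist \<tau> z s) *v w s)"
  define P where "P = (\<lambda>s. F1 (z s) (max_hist \<tau> z s) *v (v s - w s))"
  define e where "e s = norm (y s - z s)" for s
  have "0 \<le> T" "0 \<le> \<tau>" using t \<open>0 < \<tau>\<close> by simp_all
  have "0 \<le> \<delta>" using LIE_close[OF t] norm_ge_zero order_trans by blast
  have cy: "continuous_on {-\<tau>..T} y" and cz: "continuous_on {-\<tau>..T} z"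
    using y z unfolding dde_solution_def by blast+
  have window_cont: "continuous_on {s-\<tau>..s} y" "continuous_on {s-\<tau>..s} z" if "s \<in> {0..T}" for s
    using that by (auto intro: continuous_on_subset[OF cy] continuous_on_subset[OF cz])
  have P_int_s: "integrable (lebesgue_on {0..s}) P" if "s \<in> {0..T}" for s
    using that by (intro integrable_subinterval[OF P_int[folded P_def]]) auto
  have diff: "integrable (lebesgue_on {0..s}) (\<lambda>\<sigma>. Gy \<sigma> - Gz \<sigma> - P \<sigma>)"
    "y s - z s = integral\<^sup>L (lebesgue_on {0..s}) (\<lambda>\<sigma>. Gy \<sigma> - Gz \<sigma> - P \<sigma>)
      + integral\<^sup>L (lebesgue_on {0..s}) P" if s: "s \<in> {0..T}" for s
    using dde_solutions_diff_integral[OF y z \<open>0 \<le> \<tau>\<close> s P_int_s[OF s]]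
    unfolding Gy_def Gz_def by auto
  have "e t \<le> (C * T + 1) * \<delta> * exp (lam * T)"
  proof (rule exp_weighted_gronwall[OF _ \<open>0 \<le> T\<close> _ lam _ _ t])
    show "continuous_on {0..T} e"
      unfolding e_def
      by (intro continuous_intros continuous_on_subset[OF cy] continuous_on_subset[OF cz])
         (use \<open>0 \<le> \<tau>\<close> in auto)
    fix W s assume "0 \<le> W" and W: "\<And>s. s \<in> {0..T} \<Longrightarrow> e s \<le> W * exp (lam * s)"
      and s: "s \<in> {0..T}"
    have window: "norm (y \<sigma> - z \<sigma>) \<le> W * exp (lam * s')" if "s' \<in> {0..T}" "\<sigma> \<in> {s'-\<tau>..s'}" for \<sigma> s'
      using W lam by (intro dde_solution_error_window[OF y z \<open>0 \<le> W\<close> _ _ that]) (auto simp: e_def)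
    have "AE \<sigma> in lebesgue_on {0..s}. \<sigma> \<in> {0..s} \<and> norm (v \<sigma>) \<le> M"
      using AE_lebesgue_on_subset[OF v_bdd, of "{0..s}"] s by (auto intro: AE_lebesgue_onI)
    then have integrand: "AE \<sigma> in lebesgue_on {0..s}.
        norm (Gy \<sigma> - Gz \<sigma> - P \<sigma>) \<le> C * (1 + real CARD('n)) * W * exp (lam * \<sigma>) + C * \<delta>"
    proof eventually_elim
      case (elim \<sigma>)
      then have \<sigma>: "\<sigma> \<in> {0..T}" using s by auto
      have "norm (Gy \<sigma> - Gz \<sigma> - P \<sigma>) = norm (F0 (y \<sigma>) (LIE k \<tau> y \<sigma>) - F0 (z \<sigma>) (max_hist \<tau> z \<sigma>)
          + (F1 (y \<sigma>) (LIE k \<tau> y \<sigma>) - F1 (z \<sigma>) (max_hist \<tau> z \<sigma>)) *v v \<sigma>)"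
        by (simp add: Gy_def Gz_def P_def algebra_simps)
      also have "\<dots> \<le> C * (1 + real CARD('n)) * (W * exp (lam * \<sigma>)) + C * \<delta>"
        using elim window[OF \<sigma>] LIE_close[OF \<sigma>]
        by (intro norm_LIE_field_diff_le[OF F \<open>0 \<le> C\<close> _ \<open>1 \<le> k\<close> \<open>0 < \<tau>\<close>] window_cont[OF \<sigma>]) auto
      finally show ?case by (simp add: mult.assoc)
    qed
    have "e s \<le> norm (integral\<^sup>L (lebesgue_on {0..s}) (\<lambda>\<sigma>. Gy \<sigma> - Gz \<sigma> - P \<sigma>))
        + norm (integral\<^sup>L (lebesgue_on {0..s}) P)"
      unfolding e_def diff(2)[OF s] by (rule norm_triangle_ineq)
    also have "\<dots> \<le> C * (1 + real CARD('n)) * W * (exp (lam * s) - 1) / lam + C * \<delta> * s + \<delta>"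
      using norm_integral_le_exp_affine[OF diff(1)[OF s] _ lam(1) integrand] P_small[OF s] s
      by (simp add: P_def)
    also have "\<dots> \<le> C * (1 + real CARD('n)) * W * (exp (lam * s) - 1) / lam + (C * T + 1) * \<delta>"
    proof -
      have "C * \<delta> * s \<le> C * \<delta> * T" using s \<open>0 \<le> C\<close> \<open>0 \<le> \<delta>\<close> by (intro mult_left_mono) auto
      then show ?thesis by (simp add: algebra_simps)
    qed
    finally show "e s \<le> C * (1 + real CARD('n)) * W * (exp (lam * s) - 1) / lam + (C * T + 1) * \<delta>" .
  qed (use \<open>0 \<le> C\<close> in \<open>auto simp: e_def\<close>)
  then show ?thesis by (simp add: e_def)
qed

lemma uniform_limit_LIE_dde_solutions:
  fixes F0 :: "real^'n \<Rightarrow> real^'n \<Rightarrow> real^'n" and F1 :: "real^'n \<Rightarrow> real^'n \<Rightarrow> real^'m^'n"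
  assumes "0 < \<tau>" "0 < T"
    and F: "\<And>a b a' b' u. norm u \<le> M \<Longrightarrow>
      norm (F0 a b - F0 a' b' + (F1 a b - F1 a' b') *v u) \<le> C * (norm (a - a') + norm (b - b'))"
    and "0 \<le> C"
    and v_bdd: "\<And>k. AE s in lebesgue_on {0..T}. norm (v k s) \<le> M"
    and y: "\<And>k. 1 \<le> k \<Longrightarrow>
      dde_solution \<tau> T \<phi> (\<lambda>y t. F0 (y t) (LIE k \<tau> y t) + F1 (y t) (LIE k \<tau> y t) *v v k t) (y k)"
    and z: "dde_solution \<tau> T \<phi> (\<lambda>y t. F0 (y t) (max_hist \<tau> y t) + F1 (y t) (max_hist \<tau> y t) *v w t) z"
    and P_int: "\<And>k. integrable (lebesgue_on {0..T}) (\<lambda>s. F1 (z s) (max_hist \<tau> z s) *v (v k s - w s))"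
    and P_lim: "uniform_limit {0..T}
      (\<lambda>k t. integral\<^sup>L (lebesgue_on {0..t}) (\<lambda>s. F1 (z s) (max_hist \<tau> z s) *v (v k s - w s)))
      (\<lambda>_. 0) sequentially"
  shows "uniform_limit {0..T} y z sequentially"
  unfolding uniform_limit_iff
proof (intro allI impI)
  fix \<epsilon> :: real assume "0 < \<epsilon>"
  define lam where "lam = 2 * (C * (1 + real CARD('n))) + 1"
  have lam: "0 < lam" "2 * (C * (1 + real CARD('n))) \<le> lam"
    unfolding lam_def using \<open>0 \<le> C\<close> by (auto intro!: add_nonneg_pos mult_nonneg_nonneg)
  define \<delta> where "\<delta> = \<epsilon> / (2 * ((C * T + 1) * exp (lam * T)))"
  have "0 < C * T + 1" using \<open>0 \<le> C\<close> \<open>0 < T\<close> by (simp add: add_nonneg_pos)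
  then have "0 < \<delta>" and \<delta>: "(C * T + 1) * \<delta> * exp (lam * T) < \<epsilon>"
    using \<open>0 < \<epsilon>\<close> by (simp_all add: \<delta>_def)
  have "uniform_limit {0..T} (\<lambda>k. LIE k \<tau> z) (max_hist \<tau> z) sequentially"
    using uniform_limit_LIE_max_hist[OF \<open>0 < \<tau>\<close>] z unfolding dde_solution_def by blast
  then have "\<forall>\<^sub>F k in sequentially. \<forall>s\<in>{0..T}. dist (LIE k \<tau> z s) (max_hist \<tau> z s) < \<delta>"
    using \<open>0 < \<delta>\<close> unfolding uniform_limit_iff by blast
  moreover have "\<forall>\<^sub>F k in sequentially. \<forall>s\<in>{0..T}.
      dist (integral\<^sup>L (lebesgue_on {0..s}) (\<lambda>\<sigma>. F1 (z \<sigma>) (max_hist \<tau> z \<sigma>) *v (v k \<sigma> - w \<sigma>))) 0 < \<delta>"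
    using P_lim \<open>0 < \<delta>\<close> unfolding uniform_limit_iff by blast
  moreover have "\<forall>\<^sub>F k in sequentially. 1 \<le> k" by (rule eventually_ge_at_top)
  ultimately show "\<forall>\<^sub>F k in sequentially. \<forall>t\<in>{0..T}. dist (y k t) (z t) < \<epsilon>"
  proof eventually_elim
    case (elim k)
    show ?case
    proof
      fix t assume t: "t \<in> {0..T}"
      have "norm (y k t - z t) \<le> (C * T + 1) * \<delta> * exp (lam * T)"
        by (rule LIE_dde_solution_error[where M=M and v="v k" and w=w])
           (use assms lam elim t in \<open>auto simp: dist_norm less_imp_le\<close>)
      then show "dist (y k t) (z t) < \<epsilon>" using \<delta> by (simp add: dist_norm)
    qed
  qed
qed

theorem lemma5p1:
  fixes T \<tau> :: real
    and F0 :: "real^'n \<Rightarrow> real^'n \<Rightarrow> real^'n"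
    and F1 :: "real^'n \<Rightarrow> real^'n \<Rightarrow> real^'m^'n"
    and \<phi> :: "real \<Rightarrow> real^'n"
    and uk :: "nat \<Rightarrow> real \<Rightarrow> real^'m"
    and u :: "real \<Rightarrow> real^'m"
    and xk :: "nat \<Rightarrow> real \<Rightarrow> real^'n"
    and x :: "real \<Rightarrow> real^'n"
  assumes T_pos: "T > 0" and tau_pos: "\<tau> > 0"
    and F0_lip: "globally_lipschitz (\<lambda>p. F0 (fst p) (snd p))"
    and F1_lip: "globally_lipschitz (\<lambda>p. F1 (fst p) (snd p))"
    and F0_C1: "C1_everywhere (\<lambda>p. F0 (fst p) (snd p))"
    and F1_C1: "C1_everywhere (\<lambda>p. F1 (fst p) (snd p))"
    and phi_cont: "continuous_on {-\<tau>..0} \<phi>"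
    and uk_meas: "\<And>k. uk k \<in> borel_measurable (lebesgue_on {0..T})"
    and uk_bdd: "\<exists>M. \<forall>k. AE t in lebesgue_on {0..T}. norm (uk k t) \<le> M"
    and u_int: "integrable (lebesgue_on {0..T}) u"
    and weak: "\<And>g :: real \<Rightarrow> real^'m.
                 g \<in> borel_measurable (lebesgue_on {0..T}) \<Longrightarrow>
                 (\<exists>B. AE t in lebesgue_on {0..T}. norm (g t) \<le> B) \<Longrightarrow>
                 (\<lambda>k. integral\<^sup>L (lebesgue_on {0..T}) (\<lambda>t. uk k t \<bullet> g t))
                   \<longlonglongrightarrow> integral\<^sup>L (lebesgue_on {0..T}) (\<lambda>t. u t \<bullet> g t)"
    and xk_sol: "\<And>k. k \<ge> 1 \<Longrightarrow> dde_solution \<tau> T \<phi>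
                   (\<lambda>y t. F0 (y t) (LIE k \<tau> y t) + F1 (y t) (LIE k \<tau> y t) *v uk k t) (xk k)"
    and x_sol: "dde_solution \<tau> T \<phi>
                   (\<lambda>y t. F0 (y t) (max_hist \<tau> y t) + F1 (y t) (max_hist \<tau> y t) *v u t) x"
  shows "uniform_limit {0..T} xk x sequentially"
proof -
  obtain M where M: "\<And>k. AE t in lebesgue_on {0..T}. norm (uk k t) \<le> M"
    using uk_bdd by blast
  obtain C where "0 \<le> C" and F: "\<And>a b a' b' v. norm v \<le> M \<Longrightarrow>
      norm (F0 a b - F0 a' b' + (F1 a b - F1 a' b') *v v) \<le> C * (norm (a - a') + norm (b - b'))"
    using control_affine_lipschitzE[OF F0_lip F1_lip] by blast
  have x_cont: "continuous_on {-\<tau>..T} x"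
    using x_sol unfolding dde_solution_def by blast
  obtain L where "L-lipschitz_on UNIV (\<lambda>p. F1 (fst p) (snd p))"
    using F1_lip unfolding globally_lipschitz_def by blast
  then have A_cont: "continuous_on {0..T} (\<lambda>s. F1 (x s) (max_hist \<tau> x s))"
    using tau_pos by (intro continuous_on_compose_max_hist lipschitz_on_continuous_on x_cont) auto
  note weak_limit = uniform_limit_integral_matrix_vector_mult_weak[OF A_cont uk_meas M u_int weak]
  show ?thesis
    by (rule uniform_limit_LIE_dde_solutions[OF tau_pos T_pos F \<open>0 \<le> C\<close> M xk_sol x_sol weak_limit])
qed

end
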